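(* Let $A>0$ and assume $\lambda_0:=A-1>0$. Fix $0<\mu_0<\lambda_0$ and $a$ with $\mu_0+1<a<\lambda_0+1$. Let $\theta\in C_b(\mathbb{R})$. Then there is $\varepsilon_0>0$ such that for any $|\varepsilon|<\varepsilon_0$ the following holds: any global nonnegative solution $u=u^\varepsilon(t,x,y)$ of $$\partial_t u=\partial_{xx}u+\partial_{yy}u+u\left(1-A^2\big(y-\varepsilon\theta(x)\big)^2-\int_{\mathbb{R}}u(t,x,y')\,dy'\right),\quad t>0,\ x,y\in\mathbb{R},$$ starting from an initial datum $u_0=u_0(x,y)$ such that $$M=M(u_0):=\sup_{(x,y)\in\mathbb{R}^2}u_0(x,y)e^{\frac12 a y^2}<+\infty,$$ satisfies $$0\le u(t,x,y)\le Me^{-\mu_0 t}e^{-\frac12 a y^2}\quad\text{for all } t\ge 0,\ x\in\mathbb{R},\ y\in\mathbb{R}.$$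
   Context: $C_b(\mathbb{R})$ denotes the bounded continuous functions on $\mathbb{R}$. The number $\lambda_0=A-1$ is the principal eigenvalue of $-\frac{d^2}{dy^2}-(1-A^2y^2)$ on $L^2(\mathbb{R})$. *)

theory Defs
  imports "HOL-Analysis.Analysis"
begin

definition is_global_solution ::
  "real \<Rightarrow> real \<Rightarrow> (real \<Rightarrow> real) \<Rightarrow> (real \<Rightarrow> real \<Rightarrow> real)
   \<Rightarrow> (real \<Rightarrow> real \<Rightarrow> real \<Rightarrow> real) \<Rightarrow> bool" where
  "is_global_solution A eps theta u0 u \<longleftrightarrow>
     continuous_on ({0..} \<times> UNIV \<times> UNIV) (\<lambda>(t, x, y). u t x y)
   \<and> (\<forall>x y. u 0 x y = u0 x y)
   \<and> (\<forall>T\<ge>0. bounded ((\<lambda>(t, x, y). u t x y) ` ({0..T} \<times> UNIV \<times> UNIV)))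
   \<and> (\<forall>t\<ge>0. \<forall>x. integrable lborel (\<lambda>y'. u t x y'))
   \<and> (\<exists>ut ux uxx uy uyy :: real \<Rightarrow> real \<Rightarrow> real \<Rightarrow> real.
        \<forall>t>0. \<forall>x y.
          ((\<lambda>s. u s x y) has_real_derivative ut t x y) (at t)
        \<and> ((\<lambda>\<xi>. u t \<xi> y) has_real_derivative ux t x y) (at x)
        \<and> ((\<lambda>\<xi>. ux t \<xi> y) has_real_derivative uxx t x y) (at x)
        \<and> ((\<lambda>\<eta>. u t x \<eta>) has_real_derivative uy t x y) (at y)
        \<and> ((\<lambda>\<eta>. uy t x \<eta>) has_real_derivative uyy t x y) (at y)
        \<and> ut t x y = uxx t x y + uyy t x y
            + u t x y * (1 - A\<^sup>2 * (y - eps * theta x)\<^sup>2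
                         - (LINT y'|lborel. u t x y')))"

end

theory Submission
  imports Defs
begin

(* Dropping the nonnegative nonlocal term, u is a subsolution of the linear equation
   v_t = v_xx + v_yy + c v with c = 1 - A^2 (y - eps theta x)^2.  The Gaussian
   w = M exp (-mu0 t) exp (-a y^2 / 2) satisfies w_t - w_xx - w_yy = (a - mu0 - a^2 y^2) w,
   so it is a supersolution as soon as c <= a - mu0 - a^2 y^2; for small |eps| this holds
   because a < A leaves room to absorb the bounded shift eps theta, and mu0 + 1 < a absorbs
   the constant.  Hence u - w is a subsolution that starts nonpositive, and a weak maximum
   principle on the whole plane for functions bounded above on time strips gives u <= w. *)

lemma continuous_attains_sup_off_compact:
  fixes f :: "'a::topological_space \<Rightarrow> real"
  assumes "closed S" and "compact K" and "continuous_on S f" and "q \<in> S"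
    and off: "\<And>z. z \<in> S \<Longrightarrow> z \<notin> K \<Longrightarrow> f z < f q"
  obtains p where "p \<in> S" and "\<And>z. z \<in> S \<Longrightarrow> f z \<le> f p"
proof -
  have "q \<in> K \<inter> S" using off \<open>q \<in> S\<close> by force
  moreover have "compact (K \<inter> S)" using assms(1,2) by blast
  moreover have "continuous_on (K \<inter> S) f" using assms(3) by (rule continuous_on_subset) blast
  ultimately obtain p where p: "p \<in> K \<inter> S" "\<forall>z\<in>K \<inter> S. f z \<le> f p"
    using continuous_attains_sup[of "K \<inter> S" f] by blast
  have "f z \<le> f p" if "z \<in> S" for z
  proof (cases "z \<in> K")
    case False
    then have "f z < f q" using off[OF that] by blast
    also have "f q \<le> f p" using p \<open>q \<in> K \<inter> S\<close> by blast
    finally show ?thesis by simp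
  qed (use p that in blast)
  with p show thesis using that by blast
qed

lemma coercive_attains_sup_on_strip:
  fixes \<phi> :: "real \<times> real \<times> real \<Rightarrow> real"
  assumes cont: "continuous_on ({0..T} \<times> UNIV \<times> UNIV) \<phi>" and "0 < \<eta>" and "0 \<le> T"
    and coercive: "\<And>t x y. 0 \<le> t \<Longrightarrow> t \<le> T \<Longrightarrow> \<phi> (t, x, y) \<le> C - \<eta> * (x\<^sup>2 + y\<^sup>2)"
  obtains t0 x0 y0 where "0 \<le> t0" and "t0 \<le> T"
    and "\<And>t x y. 0 \<le> t \<Longrightarrow> t \<le> T \<Longrightarrow> \<phi> (t, x, y) \<le> \<phi> (t0, x0, y0)"
proof -
  define q where "q = (0::real, 0::real, 0::real)"
  define R where "R = sqrt (\<bar>C - \<phi> q\<bar> / \<eta>)"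
  have "\<phi> z < \<phi> q" if "z \<in> {0..T} \<times> UNIV \<times> UNIV" "z \<notin> {0..T} \<times> cball 0 R" for z
  proof -
    obtain t x y where z: "z = (t, x, y)" by (cases z) auto
    have "sqrt (\<bar>C - \<phi> q\<bar> / \<eta>) < sqrt (x\<^sup>2 + y\<^sup>2)"
      using that by (simp add: z R_def norm_Pair)
    then have "C - \<phi> q < \<eta> * (x\<^sup>2 + y\<^sup>2)" using \<open>0 < \<eta>\<close> by (simp add: field_simps)
    then show ?thesis using coercive[of t x y] that(1) by (simp add: z)
  qed
  moreover have "closed ({0..T} \<times> (UNIV :: (real \<times> real) set))"
    by (intro closed_Times closed_atLeastAtMost closed_UNIV)
  moreover have "compact ({0..T} \<times> cball (0 :: real \<times> real) R)"
    by (intro compact_Times compact_Icc compact_cball)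
  moreover have "q \<in> {0..T} \<times> UNIV \<times> UNIV" using \<open>0 \<le> T\<close> by (simp add: q_def)
  ultimately obtain p where "p \<in> {0..T} \<times> UNIV \<times> UNIV"
    and max: "\<And>z. z \<in> {0..T} \<times> UNIV \<times> UNIV \<Longrightarrow> \<phi> z \<le> \<phi> p"
    using continuous_attains_sup_off_compact[OF _ _ cont] by (metis UNIV_Times_UNIV)
  then obtain t0 x0 y0 where p: "p = (t0, x0, y0)" "0 \<le> t0" "t0 \<le> T" by (cases p) auto
  show thesis by (rule that[of t0 x0 y0]) (use p max in auto)
qed

lemma deriv_nonneg_at_left_max:
  fixes g :: "real \<Rightarrow> real"
  assumes "(g has_real_derivative D) (at t0)" and "0 < t0"
    and max: "\<And>s. 0 \<le> s \<Longrightarrow> s \<le> t0 \<Longrightarrow> g s \<le> g t0"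
  shows "D \<ge> 0"
proof (rule ccontr)
  assume "\<not> D \<ge> 0"
  then obtain e where "e > 0" and e: "\<And>h. 0 < h \<Longrightarrow> h < e \<Longrightarrow> g t0 < g (t0 - h)"
    using DERIV_neg_dec_left[OF assms(1)] by force
  define h where "h = min e t0 / 2"
  have "0 < h" "h < e" "h \<le> t0" using \<open>e > 0\<close> \<open>0 < t0\<close> by (auto simp: h_def)
  then show False using e[of h] max[of "t0 - h"] by force
qed

lemma second_deriv_nonpos_at_max:
  fixes f f' :: "real \<Rightarrow> real"
  assumes f': "\<And>\<xi>. (f has_real_derivative f' \<xi>) (at \<xi>)"
    and f'': "(f' has_real_derivative D) (at x0)"
    and max: "\<And>\<xi>. f \<xi> \<le> f x0"
  shows "D \<le> 0"
proof (rule ccontr)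
  assume "\<not> D \<le> 0"
  have "f' x0 = 0"
    using DERIV_local_max[OF f'[of x0], of 1] max by auto
  obtain d where "d > 0" and d: "\<And>h. 0 < h \<Longrightarrow> h < d \<Longrightarrow> f' x0 < f' (x0 + h)"
    using DERIV_pos_inc_right[OF f''] \<open>\<not> D \<le> 0\<close> by force
  obtain z where z: "x0 < z" "z < x0 + d / 2" "f (x0 + d / 2) - f x0 = d / 2 * f' z"
    using MVT2[of x0 "x0 + d / 2" f f'] f' \<open>d > 0\<close> by auto
  have "f' z > 0" using d[of "z - x0"] z \<open>f' x0 = 0\<close> by auto
  then have "d / 2 * f' z > 0" using \<open>d > 0\<close> by simp
  then have "f (x0 + d / 2) > f x0" using z(3) by linarith
  then show False using max[of "x0 + d / 2"] by simp
qed

definition heat_subsolution ::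
  "(real \<Rightarrow> real \<Rightarrow> real) \<Rightarrow> (real \<Rightarrow> real \<Rightarrow> real \<Rightarrow> real) \<Rightarrow> bool" where
  "heat_subsolution c v \<longleftrightarrow>
     (\<exists>vt vx vxx vy vyy :: real \<Rightarrow> real \<Rightarrow> real \<Rightarrow> real.
        \<forall>t>0. \<forall>x y.
          ((\<lambda>s. v s x y) has_real_derivative vt t x y) (at t)
        \<and> ((\<lambda>\<xi>. v t \<xi> y) has_real_derivative vx t x y) (at x)
        \<and> ((\<lambda>\<xi>. vx t \<xi> y) has_real_derivative vxx t x y) (at x)
        \<and> ((\<lambda>\<eta>. v t x \<eta>) has_real_derivative vy t x y) (at y)
        \<and> ((\<lambda>\<eta>. vy t x \<eta>) has_real_derivative vyy t x y) (at y)
        \<and> vt t x y \<le> vxx t x y + vyy t x y + c x y * v t x y)"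

lemma heat_subsolutionI:
  assumes "\<And>t x y. 0 < t \<Longrightarrow> ((\<lambda>s. v s x y) has_real_derivative vt t x y) (at t)"
    and "\<And>t x y. 0 < t \<Longrightarrow> ((\<lambda>\<xi>. v t \<xi> y) has_real_derivative vx t x y) (at x)"
    and "\<And>t x y. 0 < t \<Longrightarrow> ((\<lambda>\<xi>. vx t \<xi> y) has_real_derivative vxx t x y) (at x)"
    and "\<And>t x y. 0 < t \<Longrightarrow> ((\<lambda>\<eta>. v t x \<eta>) has_real_derivative vy t x y) (at y)"
    and "\<And>t x y. 0 < t \<Longrightarrow> ((\<lambda>\<eta>. vy t x \<eta>) has_real_derivative vyy t x y) (at y)"
    and "\<And>t x y. 0 < t \<Longrightarrow> vt t x y \<le> vxx t x y + vyy t x y + c x y * v t x y"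
  shows "heat_subsolution c v"
  unfolding heat_subsolution_def using assms
  by (intro exI[of _ vt] exI[of _ vx] exI[of _ vxx] exI[of _ vy] exI[of _ vyy]) simp

lemma heat_subsolutionE:
  assumes "heat_subsolution c v"
  obtains vt vx vxx vy vyy where
    "\<And>t x y. 0 < t \<Longrightarrow> ((\<lambda>s. v s x y) has_real_derivative vt t x y) (at t)"
    "\<And>t x y. 0 < t \<Longrightarrow> ((\<lambda>\<xi>. v t \<xi> y) has_real_derivative vx t x y) (at x)"
    "\<And>t x y. 0 < t \<Longrightarrow> ((\<lambda>\<xi>. vx t \<xi> y) has_real_derivative vxx t x y) (at x)"
    "\<And>t x y. 0 < t \<Longrightarrow> ((\<lambda>\<eta>. v t x \<eta>) has_real_derivative vy t x y) (at y)"
    "\<And>t x y. 0 < t \<Longrightarrow> ((\<lambda>\<eta>. vy t x \<eta>) has_real_derivative vyy t x y) (at y)"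
    "\<And>t x y. 0 < t \<Longrightarrow> vt t x y \<le> vxx t x y + vyy t x y + c x y * v t x y"
proof -
  obtain vt vx vxx vy vyy where "\<forall>t>0. \<forall>x y.
          ((\<lambda>s. v s x y) has_real_derivative vt t x y) (at t)
        \<and> ((\<lambda>\<xi>. v t \<xi> y) has_real_derivative vx t x y) (at x)
        \<and> ((\<lambda>\<xi>. vx t \<xi> y) has_real_derivative vxx t x y) (at x)
        \<and> ((\<lambda>\<eta>. v t x \<eta>) has_real_derivative vy t x y) (at y)
        \<and> ((\<lambda>\<eta>. vy t x \<eta>) has_real_derivative vyy t x y) (at y)
        \<and> vt t x y \<le> vxx t x y + vyy t x y + c x y * v t x y"
    using assms unfolding heat_subsolution_def by blast
  then show thesis by (intro that[of vt vx vxx vy vyy]) simp_all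
qed

lemma heat_subsolution_exp_weight:
  assumes "heat_subsolution c v"
  shows "heat_subsolution (\<lambda>x y. c x y - \<kappa>) (\<lambda>t x y. exp (- \<kappa> * t) * v t x y)"
proof -
  obtain vt vx vxx vy vyy where
    vt: "\<And>t x y. 0 < t \<Longrightarrow> ((\<lambda>s. v s x y) has_real_derivative vt t x y) (at t)" and
    vx: "\<And>t x y. 0 < t \<Longrightarrow> ((\<lambda>\<xi>. v t \<xi> y) has_real_derivative vx t x y) (at x)" and
    vxx: "\<And>t x y. 0 < t \<Longrightarrow> ((\<lambda>\<xi>. vx t \<xi> y) has_real_derivative vxx t x y) (at x)" and
    vy: "\<And>t x y. 0 < t \<Longrightarrow> ((\<lambda>\<eta>. v t x \<eta>) has_real_derivative vy t x y) (at y)" and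
    vyy: "\<And>t x y. 0 < t \<Longrightarrow> ((\<lambda>\<eta>. vy t x \<eta>) has_real_derivative vyy t x y) (at y)" and
    pde: "\<And>t x y. 0 < t \<Longrightarrow> vt t x y \<le> vxx t x y + vyy t x y + c x y * v t x y"
    using heat_subsolutionE[OF assms] by blast
  define e where "e t = exp (- \<kappa> * t)" for t
  show ?thesis
  proof (rule heat_subsolutionI[where vt = "\<lambda>t x y. e t * vt t x y - \<kappa> * e t * v t x y"
        and vx = "\<lambda>t x y. e t * vx t x y" and vxx = "\<lambda>t x y. e t * vxx t x y"
        and vy = "\<lambda>t x y. e t * vy t x y" and vyy = "\<lambda>t x y. e t * vyy t x y"])
    fix t x y :: real assume "0 < t"
    show "((\<lambda>s. exp (- \<kappa> * s) * v s x y) has_real_derivative e t * vt t x y - \<kappa> * e t * v t x y) (at t)"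
      unfolding e_def by (auto intro!: derivative_eq_intros vt[OF \<open>0 < t\<close>] simp: algebra_simps)
    show "((\<lambda>\<xi>. exp (- \<kappa> * t) * v t \<xi> y) has_real_derivative e t * vx t x y) (at x)"
      unfolding e_def by (auto intro!: derivative_eq_intros vx[OF \<open>0 < t\<close>])
    show "((\<lambda>\<xi>. e t * vx t \<xi> y) has_real_derivative e t * vxx t x y) (at x)"
      by (auto intro!: derivative_eq_intros vxx[OF \<open>0 < t\<close>])
    show "((\<lambda>\<eta>. exp (- \<kappa> * t) * v t x \<eta>) has_real_derivative e t * vy t x y) (at y)"
      unfolding e_def by (auto intro!: derivative_eq_intros vy[OF \<open>0 < t\<close>])
    show "((\<lambda>\<eta>. e t * vy t x \<eta>) has_real_derivative e t * vyy t x y) (at y)"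
      by (auto intro!: derivative_eq_intros vyy[OF \<open>0 < t\<close>])
    have "e t * vt t x y \<le> e t * (vxx t x y + vyy t x y + c x y * v t x y)"
      using pde[OF \<open>0 < t\<close>] by (simp add: e_def)
    then show "e t * vt t x y - \<kappa> * e t * v t x y
        \<le> e t * vxx t x y + e t * vyy t x y + (c x y - \<kappa>) * (exp (- \<kappa> * t) * v t x y)"
      by (simp add: e_def algebra_simps)
  qed
qed

lemma heat_subsolution_no_penalized_max:
  fixes v :: "real \<Rightarrow> real \<Rightarrow> real \<Rightarrow> real" and c :: "real \<Rightarrow> real \<Rightarrow> real"
  assumes sub: "heat_subsolution c v"
    and c_nonpos: "\<And>x y. c x y \<le> 0"
    and "0 < \<eta>" and "0 < t0" and "0 < v t0 x0 y0"
    and max: "\<And>t x y. 0 \<le> t \<Longrightarrow> t \<le> t0 \<Longrightarrow>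
      v t x y - \<eta> * (x\<^sup>2 + y\<^sup>2 + 5 * t) \<le> v t0 x0 y0 - \<eta> * (x0\<^sup>2 + y0\<^sup>2 + 5 * t0)"
  shows False
proof -
  obtain vt vx vxx vy vyy where
    vt: "\<And>t x y. 0 < t \<Longrightarrow> ((\<lambda>s. v s x y) has_real_derivative vt t x y) (at t)" and
    vx: "\<And>t x y. 0 < t \<Longrightarrow> ((\<lambda>\<xi>. v t \<xi> y) has_real_derivative vx t x y) (at x)" and
    vxx: "\<And>t x y. 0 < t \<Longrightarrow> ((\<lambda>\<xi>. vx t \<xi> y) has_real_derivative vxx t x y) (at x)" and
    vy: "\<And>t x y. 0 < t \<Longrightarrow> ((\<lambda>\<eta>. v t x \<eta>) has_real_derivative vy t x y) (at y)" and
    vyy: "\<And>t x y. 0 < t \<Longrightarrow> ((\<lambda>\<eta>. vy t x \<eta>) has_real_derivative vyy t x y) (at y)" and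
    pde: "\<And>t x y. 0 < t \<Longrightarrow> vt t x y \<le> vxx t x y + vyy t x y + c x y * v t x y"
    using heat_subsolutionE[OF sub] by blast
  have "0 \<le> vt t0 x0 y0 - 5 * \<eta>"
  proof (rule deriv_nonneg_at_left_max[where g = "\<lambda>s. v s x0 y0 - \<eta> * (x0\<^sup>2 + y0\<^sup>2 + 5 * s)"])
    show "((\<lambda>s. v s x0 y0 - \<eta> * (x0\<^sup>2 + y0\<^sup>2 + 5 * s)) has_real_derivative vt t0 x0 y0 - 5 * \<eta>) (at t0)"
      by (rule derivative_eq_intros refl vt[OF \<open>0 < t0\<close>])+ simp
  qed (use \<open>0 < t0\<close> max in auto)
  moreover have "vxx t0 x0 y0 - 2 * \<eta> \<le> 0"
  proof (rule second_deriv_nonpos_at_max[where f = "\<lambda>\<xi>. v t0 \<xi> y0 - \<eta> * (\<xi>\<^sup>2 + y0\<^sup>2 + 5 * t0)"])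
    show "((\<lambda>\<xi>. v t0 \<xi> y0 - \<eta> * (\<xi>\<^sup>2 + y0\<^sup>2 + 5 * t0)) has_real_derivative
        vx t0 \<xi> y0 - 2 * \<eta> * \<xi>) (at \<xi>)" for \<xi>
      by (rule derivative_eq_intros refl vx[OF \<open>0 < t0\<close>])+ simp
    show "((\<lambda>\<xi>. vx t0 \<xi> y0 - 2 * \<eta> * \<xi>) has_real_derivative vxx t0 x0 y0 - 2 * \<eta>) (at x0)"
      by (rule derivative_eq_intros refl vxx[OF \<open>0 < t0\<close>])+ simp
  qed (use max \<open>0 < t0\<close> in auto)
  moreover have "vyy t0 x0 y0 - 2 * \<eta> \<le> 0"
  proof (rule second_deriv_nonpos_at_max[where f = "\<lambda>\<zeta>. v t0 x0 \<zeta> - \<eta> * (x0\<^sup>2 + \<zeta>\<^sup>2 + 5 * t0)"])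
    show "((\<lambda>\<zeta>. v t0 x0 \<zeta> - \<eta> * (x0\<^sup>2 + \<zeta>\<^sup>2 + 5 * t0)) has_real_derivative
        vy t0 x0 \<zeta> - 2 * \<eta> * \<zeta>) (at \<zeta>)" for \<zeta>
      by (rule derivative_eq_intros refl vy[OF \<open>0 < t0\<close>])+ simp
    show "((\<lambda>\<zeta>. vy t0 x0 \<zeta> - 2 * \<eta> * \<zeta>) has_real_derivative vyy t0 x0 y0 - 2 * \<eta>) (at y0)"
      by (rule derivative_eq_intros refl vyy[OF \<open>0 < t0\<close>])+ simp
  qed (use max \<open>0 < t0\<close> in auto)
  moreover have "c x0 y0 * v t0 x0 y0 \<le> 0"
    using c_nonpos[of x0 y0] \<open>0 < v t0 x0 y0\<close> by (simp add: mult_nonpos_nonneg)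
  \<comment> \<open>So 5 \<eta> \<le> v_t \<le> v_xx + v_yy \<le> 4 \<eta>: the time part of the penalty wins.\<close>
  ultimately show False using pde[OF \<open>0 < t0\<close>, of x0 y0] \<open>0 < \<eta>\<close> by linarith
qed

lemma heat_subsolution_nonpos_of_nonpos_coeff:
  fixes v :: "real \<Rightarrow> real \<Rightarrow> real \<Rightarrow> real" and c :: "real \<Rightarrow> real \<Rightarrow> real"
  assumes cont: "continuous_on ({0..} \<times> UNIV \<times> UNIV) (\<lambda>(t, x, y). v t x y)"
    and bdd: "\<And>T. 0 \<le> T \<Longrightarrow> \<exists>C. \<forall>t\<in>{0..T}. \<forall>x y. v t x y \<le> C"
    and sub: "heat_subsolution c v"
    and c_nonpos: "\<And>x y. c x y \<le> 0"
    and init: "\<And>x y. v 0 x y \<le> 0"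
    and "0 \<le> t1"
  shows "v t1 x1 y1 \<le> 0"
proof (rule ccontr)
  assume "\<not> ?thesis"
  then have "v t1 x1 y1 > 0" by simp
  obtain C where C: "\<And>t x y. t \<in> {0..t1} \<Longrightarrow> v t x y \<le> C" using bdd[OF \<open>0 \<le> t1\<close>] by blast
  \<comment> \<open>\<eta> is small enough to keep \<phi> positive at (t1, x1, y1); the penalty makes \<phi> attain
    its maximum on the strip.\<close>
  define \<eta> where "\<eta> = v t1 x1 y1 / (x1\<^sup>2 + y1\<^sup>2 + 5 * t1 + 1)"
  define \<phi> where "\<phi> = (\<lambda>(t, x, y). v t x y - \<eta> * (x\<^sup>2 + y\<^sup>2 + 5 * t))"
  have den: "x1\<^sup>2 + y1\<^sup>2 + 5 * t1 + 1 > 0" using \<open>0 \<le> t1\<close> by (simp add: add_nonneg_pos)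
  have "0 < \<eta>" using \<open>v t1 x1 y1 > 0\<close> den by (simp add: \<eta>_def)
  have "\<phi> (t1, x1, y1) > 0"
  proof -
    have "\<eta> * (x1\<^sup>2 + y1\<^sup>2 + 5 * t1) < \<eta> * (x1\<^sup>2 + y1\<^sup>2 + 5 * t1 + 1)" using \<open>0 < \<eta>\<close> by simp
    also have "\<dots> = v t1 x1 y1" using den by (simp add: \<eta>_def)
    finally show ?thesis by (simp add: \<phi>_def)
  qed
  have "continuous_on ({0..t1} \<times> UNIV \<times> UNIV) \<phi>"
  proof -
    have "continuous_on ({0..t1} \<times> UNIV \<times> UNIV) (\<lambda>(t, x, y). v t x y)"
      using cont by (rule continuous_on_subset) auto
    then show ?thesis unfolding \<phi>_def case_prod_beta by (intro continuous_intros)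
  qed
  moreover have "\<phi> (t, x, y) \<le> C - \<eta> * (x\<^sup>2 + y\<^sup>2)" if "0 \<le> t" "t \<le> t1" for t x y
  proof -
    have "0 \<le> \<eta> * (5 * t)" using \<open>0 < \<eta>\<close> that by simp
    then show ?thesis using C[of t x y] that by (simp add: \<phi>_def algebra_simps)
  qed
  ultimately obtain t0 x0 y0 where "0 \<le> t0" "t0 \<le> t1"
    and max: "\<And>t x y. 0 \<le> t \<Longrightarrow> t \<le> t1 \<Longrightarrow> \<phi> (t, x, y) \<le> \<phi> (t0, x0, y0)"
    using coercive_attains_sup_on_strip[of t1 \<phi> \<eta> C] \<open>0 < \<eta>\<close> \<open>0 \<le> t1\<close> by blast
  have "\<eta> * (x0\<^sup>2 + y0\<^sup>2 + 5 * t0) < v t0 x0 y0"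
    using max[OF \<open>0 \<le> t1\<close> order_refl, of x1 y1] \<open>\<phi> (t1, x1, y1) > 0\<close> by (simp add: \<phi>_def)
  moreover have "0 \<le> \<eta> * (x0\<^sup>2 + y0\<^sup>2 + 5 * t0)" using \<open>0 < \<eta>\<close> \<open>0 \<le> t0\<close> by simp
  ultimately have "0 < v t0 x0 y0" by linarith
  with init[of x0 y0] \<open>0 \<le> t0\<close> have "0 < t0" by (cases "t0 = 0") auto
  show False
  proof (rule heat_subsolution_no_penalized_max[OF sub c_nonpos \<open>0 < \<eta>\<close> \<open>0 < t0\<close> \<open>0 < v t0 x0 y0\<close>])
    show "v t x y - \<eta> * (x\<^sup>2 + y\<^sup>2 + 5 * t) \<le> v t0 x0 y0 - \<eta> * (x0\<^sup>2 + y0\<^sup>2 + 5 * t0)"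
      if "0 \<le> t" "t \<le> t0" for t x y
      using max[of t x y] that \<open>t0 \<le> t1\<close> by (simp add: \<phi>_def)
  qed
qed

lemma heat_subsolution_maximum_principle:
  fixes v :: "real \<Rightarrow> real \<Rightarrow> real \<Rightarrow> real" and c :: "real \<Rightarrow> real \<Rightarrow> real"
  assumes cont: "continuous_on ({0..} \<times> UNIV \<times> UNIV) (\<lambda>(t, x, y). v t x y)"
    and bdd: "\<And>T. 0 \<le> T \<Longrightarrow> \<exists>C. \<forall>t\<in>{0..T}. \<forall>x y. v t x y \<le> C"
    and sub: "heat_subsolution c v"
    and c_le: "\<And>x y. c x y \<le> k"
    and init: "\<And>x y. v 0 x y \<le> 0"
    and "0 \<le> t1"
  shows "v t1 x1 y1 \<le> 0"
proof -
  define w where "w t x y = exp (- \<bar>k\<bar> * t) * v t x y" for t x y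
  have "w t1 x1 y1 \<le> 0"
  proof (rule heat_subsolution_nonpos_of_nonpos_coeff[where v = w])
    show "continuous_on ({0..} \<times> UNIV \<times> UNIV) (\<lambda>(t, x, y). w t x y)"
      using cont unfolding w_def case_prod_beta by (intro continuous_intros)
    show "\<exists>C. \<forall>t\<in>{0..T}. \<forall>x y. w t x y \<le> C" if T: "0 \<le> T" for T
    proof -
      obtain C where C: "\<And>t x y. t \<in> {0..T} \<Longrightarrow> v t x y \<le> C" using bdd[OF T] by blast
      have "w t x y \<le> \<bar>C\<bar>" if "t \<in> {0..T}" for t x y
      proof -
        have "exp (- \<bar>k\<bar> * t) \<le> 1" using that by simp
        then show ?thesis
          using C[OF that, of x y] unfolding w_def
          by (smt (verit) exp_gt_zero mult_left_mono mult_left_le_one_le abs_ge_zero)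
      qed
      then show ?thesis by blast
    qed
    show "heat_subsolution (\<lambda>x y. c x y - \<bar>k\<bar>) w"
      unfolding w_def by (rule heat_subsolution_exp_weight[OF sub])
    show "c x y - \<bar>k\<bar> \<le> 0" for x y using c_le[of x y] by linarith
  qed (use init \<open>0 \<le> t1\<close> in \<open>simp_all add: w_def\<close>)
  then show ?thesis by (simp add: w_def mult_le_0_iff)
qed

lemma global_solution_heat_subsolution:
  assumes sol: "is_global_solution A \<epsilon> \<theta> u0 u"
    and nonneg: "\<And>t x y. 0 \<le> t \<Longrightarrow> 0 \<le> u t x y"
  shows "heat_subsolution (\<lambda>x y. 1 - A\<^sup>2 * (y - \<epsilon> * \<theta> x)\<^sup>2) u"
proof -
  obtain ut ux uxx uy uyy :: "real \<Rightarrow> real \<Rightarrow> real \<Rightarrow> real" where D: "\<forall>t>0. \<forall>x y.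
          ((\<lambda>s. u s x y) has_real_derivative ut t x y) (at t)
        \<and> ((\<lambda>\<xi>. u t \<xi> y) has_real_derivative ux t x y) (at x)
        \<and> ((\<lambda>\<xi>. ux t \<xi> y) has_real_derivative uxx t x y) (at x)
        \<and> ((\<lambda>\<eta>. u t x \<eta>) has_real_derivative uy t x y) (at y)
        \<and> ((\<lambda>\<eta>. uy t x \<eta>) has_real_derivative uyy t x y) (at y)
        \<and> ut t x y = uxx t x y + uyy t x y
            + u t x y * (1 - A\<^sup>2 * (y - \<epsilon> * \<theta> x)\<^sup>2 - (LINT y'|lborel. u t x y'))"
    using sol unfolding is_global_solution_def by blast
  have pde: "ut t x y \<le> uxx t x y + uyy t x y + (1 - A\<^sup>2 * (y - \<epsilon> * \<theta> x)\<^sup>2) * u t x y"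
    if "0 < t" for t x y
  proof -
    have "0 \<le> (LINT y'|lborel. u t x y')"
      using nonneg \<open>0 < t\<close> by (intro integral_nonneg_AE) auto
    then have "0 \<le> u t x y * (LINT y'|lborel. u t x y')"
      using nonneg \<open>0 < t\<close> by simp
    moreover have "ut t x y = uxx t x y + uyy t x y
        + u t x y * (1 - A\<^sup>2 * (y - \<epsilon> * \<theta> x)\<^sup>2 - (LINT y'|lborel. u t x y'))"
      using D \<open>0 < t\<close> by blast
    ultimately show ?thesis by (simp add: algebra_simps)
  qed
  show ?thesis
    by (intro heat_subsolutionI[where vt = ut and vx = ux and vxx = uxx and vy = uy and vyy = uyy];
        use D pde in blast)
qed

lemma heat_subsolution_minus_gaussian:
  fixes u :: "real \<Rightarrow> real \<Rightarrow> real \<Rightarrow> real" and c :: "real \<Rightarrow> real \<Rightarrow> real"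
  assumes sub: "heat_subsolution c u"
    and c_le: "\<And>x y. c x y \<le> a - \<mu> - a\<^sup>2 * y\<^sup>2"
    and "0 \<le> M"
  shows "heat_subsolution c (\<lambda>t x y. u t x y - M * exp (- \<mu> * t) * exp (- a * y\<^sup>2 / 2))"
proof -
  define w where "w t y = M * exp (- \<mu> * t) * exp (- a * y\<^sup>2 / 2)" for t y :: real
  obtain ut ux uxx uy uyy where
    ut: "\<And>t x y. 0 < t \<Longrightarrow> ((\<lambda>s. u s x y) has_real_derivative ut t x y) (at t)" and
    ux: "\<And>t x y. 0 < t \<Longrightarrow> ((\<lambda>\<xi>. u t \<xi> y) has_real_derivative ux t x y) (at x)" and
    uxx: "\<And>t x y. 0 < t \<Longrightarrow> ((\<lambda>\<xi>. ux t \<xi> y) has_real_derivative uxx t x y) (at x)" and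
    uy: "\<And>t x y. 0 < t \<Longrightarrow> ((\<lambda>\<eta>. u t x \<eta>) has_real_derivative uy t x y) (at y)" and
    uyy: "\<And>t x y. 0 < t \<Longrightarrow> ((\<lambda>\<eta>. uy t x \<eta>) has_real_derivative uyy t x y) (at y)" and
    pde: "\<And>t x y. 0 < t \<Longrightarrow> ut t x y \<le> uxx t x y + uyy t x y + c x y * u t x y"
    using heat_subsolutionE[OF sub] by blast
  have "heat_subsolution c (\<lambda>t x y. u t x y - w t y)"
  proof (rule heat_subsolutionI[where vt = "\<lambda>t x y. ut t x y + \<mu> * w t y" and vx = ux and vxx = uxx
        and vy = "\<lambda>t x y. uy t x y + a * y * w t y"
        and vyy = "\<lambda>t x y. uyy t x y + (a - a\<^sup>2 * y\<^sup>2) * w t y"])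
    fix t x y :: real assume "0 < t"
    show "((\<lambda>s. u s x y - w s y) has_real_derivative ut t x y + \<mu> * w t y) (at t)"
      unfolding w_def by (rule derivative_eq_intros refl ut[OF \<open>0 < t\<close>])+ (simp add: algebra_simps)
    show "((\<lambda>\<xi>. u t \<xi> y - w t y) has_real_derivative ux t x y) (at x)"
      by (rule derivative_eq_intros refl ux[OF \<open>0 < t\<close>])+ simp
    show "((\<lambda>\<xi>. ux t \<xi> y) has_real_derivative uxx t x y) (at x)"
      using uxx[OF \<open>0 < t\<close>] .
    show "((\<lambda>\<eta>. u t x \<eta> - w t \<eta>) has_real_derivative uy t x y + a * y * w t y) (at y)"
      unfolding w_def by (auto intro!: derivative_eq_intros uy[OF \<open>0 < t\<close>] simp: algebra_simps)
    show "((\<lambda>\<eta>. uy t x \<eta> + a * \<eta> * w t \<eta>) has_real_derivative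
              uyy t x y + (a - a\<^sup>2 * y\<^sup>2) * w t y) (at y)"
      unfolding w_def
      by (auto intro!: derivative_eq_intros uyy[OF \<open>0 < t\<close>] simp: algebra_simps power2_eq_square)
    have "0 \<le> w t y" using \<open>0 \<le> M\<close> by (simp add: w_def)
    then have "(c x y - (a - \<mu> - a\<^sup>2 * y\<^sup>2)) * w t y \<le> 0"
      using c_le[of x y] by (simp add: mult_nonpos_nonneg)
    then show "ut t x y + \<mu> * w t y
            \<le> uxx t x y + (uyy t x y + (a - a\<^sup>2 * y\<^sup>2) * w t y) + c x y * (u t x y - w t y)"
      using pde[OF \<open>0 < t\<close>, of x y] by (simp add: algebra_simps)
  qed
  then show ?thesis by (simp add: w_def)
qed

lemma square_shift_lower_bound:
  fixes a A s \<delta> y :: real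
  assumes "a\<^sup>2 < A\<^sup>2" and "A\<^sup>2 * a\<^sup>2 * s\<^sup>2 \<le> (A\<^sup>2 - a\<^sup>2) * \<delta>"
  shows "a\<^sup>2 * y\<^sup>2 - \<delta> \<le> A\<^sup>2 * (y - s)\<^sup>2"
proof -
  define d where "d = A\<^sup>2 - a\<^sup>2"
  have "d > 0" using assms(1) by (simp add: d_def)
  have "d * (A\<^sup>2 * (y - s)\<^sup>2 - a\<^sup>2 * y\<^sup>2) + A\<^sup>2 * a\<^sup>2 * s\<^sup>2 = (d * y - A\<^sup>2 * s)\<^sup>2"
    by (simp add: d_def power2_eq_square algebra_simps)
  moreover have "A\<^sup>2 * a\<^sup>2 * s\<^sup>2 \<le> d * \<delta>" using assms(2) by (simp add: d_def)
  moreover have "0 \<le> (d * y - A\<^sup>2 * s)\<^sup>2" by simp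
  ultimately have "d * (- \<delta>) \<le> d * (A\<^sup>2 * (y - s)\<^sup>2 - a\<^sup>2 * y\<^sup>2)" by linarith
  then have "- \<delta> \<le> A\<^sup>2 * (y - s)\<^sup>2 - a\<^sup>2 * y\<^sup>2"
    using \<open>d > 0\<close> mult_le_cancel_left_pos by blast
  then show ?thesis by linarith
qed

lemma small_shift_potential_bound:
  fixes a A \<delta> :: real and \<theta> :: "real \<Rightarrow> real"
  assumes "bounded (range \<theta>)" and "0 < a" and "a < A" and "0 < \<delta>"
  obtains \<epsilon>0 where "0 < \<epsilon>0"
    and "\<And>\<epsilon> x y. \<bar>\<epsilon>\<bar> < \<epsilon>0 \<Longrightarrow> a\<^sup>2 * y\<^sup>2 - \<delta> \<le> A\<^sup>2 * (y - \<epsilon> * \<theta> x)\<^sup>2"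
proof -
  obtain B where "B > 0" and B: "\<And>x. \<bar>\<theta> x\<bar> \<le> B"
    using assms(1) unfolding bounded_pos by auto
  have "a\<^sup>2 < A\<^sup>2" using assms(2,3) by (simp add: power_strict_mono)
  define K where "K = (A\<^sup>2 - a\<^sup>2) * \<delta> / (A\<^sup>2 * a\<^sup>2 * B\<^sup>2)"
  have "K > 0" using \<open>a\<^sup>2 < A\<^sup>2\<close> assms(2,3,4) \<open>B > 0\<close> by (simp add: K_def)
  show thesis
  proof (rule that)
    show "0 < sqrt K" using \<open>K > 0\<close> by simp
    fix \<epsilon> x y :: real
    assume "\<bar>\<epsilon>\<bar> < sqrt K"
    then have "\<epsilon>\<^sup>2 < K" using \<open>K > 0\<close> by (metis real_sqrt_abs real_sqrt_less_iff)
    have "(\<theta> x)\<^sup>2 \<le> B\<^sup>2"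
      using B[of x] \<open>B > 0\<close> by (simp add: abs_le_square_iff[symmetric])
    then have "(\<epsilon> * \<theta> x)\<^sup>2 \<le> \<epsilon>\<^sup>2 * B\<^sup>2"
      by (simp add: power_mult_distrib mult_left_mono)
    also have "\<dots> \<le> K * B\<^sup>2" using \<open>\<epsilon>\<^sup>2 < K\<close> by (intro mult_right_mono) auto
    finally have "A\<^sup>2 * a\<^sup>2 * (\<epsilon> * \<theta> x)\<^sup>2 \<le> A\<^sup>2 * a\<^sup>2 * (K * B\<^sup>2)"
      by (intro mult_left_mono) auto
    also have "\<dots> = (A\<^sup>2 - a\<^sup>2) * \<delta>" using assms(2,3) \<open>B > 0\<close> by (simp add: K_def)
    finally show "a\<^sup>2 * y\<^sup>2 - \<delta> \<le> A\<^sup>2 * (y - \<epsilon> * \<theta> x)\<^sup>2"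
      using \<open>a\<^sup>2 < A\<^sup>2\<close> by (rule square_shift_lower_bound[rotated])
  qed
qed

lemma le_weighted_sup:
  fixes f :: "real \<Rightarrow> real \<Rightarrow> real" and a :: real
  assumes "bdd_above ((\<lambda>(x, y). f x y * exp (a * y\<^sup>2 / 2)) ` UNIV)"
  shows "f x y \<le> (SUP (x, y)\<in>UNIV. f x y * exp (a * y\<^sup>2 / 2)) * exp (- a * y\<^sup>2 / 2)"
proof -
  have "f x y * exp (a * y\<^sup>2 / 2) \<le> (SUP (x, y)\<in>UNIV. f x y * exp (a * y\<^sup>2 / 2))"
    using cSUP_upper[OF _ assms, of "(x, y)"] by simp
  from mult_right_mono[OF this, of "exp (- a * y\<^sup>2 / 2)"] show ?thesis
    by (simp add: mult.assoc flip: exp_add)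
qed

lemma global_solution_gaussian_bound:
  fixes u :: "real \<Rightarrow> real \<Rightarrow> real \<Rightarrow> real" and u0 :: "real \<Rightarrow> real \<Rightarrow> real"
  assumes sol: "is_global_solution A \<epsilon> \<theta> u0 u"
    and nonneg: "\<And>t x y. 0 \<le> t \<Longrightarrow> 0 \<le> u t x y"
    and potential: "\<And>x y. 1 - A\<^sup>2 * (y - \<epsilon> * \<theta> x)\<^sup>2 \<le> a - \<mu> - a\<^sup>2 * y\<^sup>2"
    and "0 \<le> M"
    and init: "\<And>x y. u0 x y \<le> M * exp (- a * y\<^sup>2 / 2)"
    and "0 \<le> t"
  shows "u t x y \<le> M * exp (- \<mu> * t) * exp (- a * y\<^sup>2 / 2)"
proof -
  define v where "v t x y = u t x y - M * exp (- \<mu> * t) * exp (- a * y\<^sup>2 / 2)" for t x y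
  have cont: "continuous_on ({0..} \<times> UNIV \<times> UNIV) (\<lambda>(t, x, y). u t x y)"
    and u0: "\<And>x y. u 0 x y = u0 x y"
    and bounded: "\<And>T. 0 \<le> T \<Longrightarrow> bounded ((\<lambda>(t, x, y). u t x y) ` ({0..T} \<times> UNIV \<times> UNIV))"
    using sol unfolding is_global_solution_def by blast+
  have "v t x y \<le> 0"
  proof (rule heat_subsolution_maximum_principle[where v = v])
    show "continuous_on ({0..} \<times> UNIV \<times> UNIV) (\<lambda>(t, x, y). v t x y)"
      using cont unfolding v_def case_prod_beta by (intro continuous_intros) auto
    show "\<exists>C. \<forall>t\<in>{0..T}. \<forall>x y. v t x y \<le> C" if T: "0 \<le> T" for T
    proof -
      obtain C where C: "\<And>t x y. t \<in> {0..T} \<Longrightarrow> \<bar>u t x y\<bar> \<le> C"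
        using bounded[OF T] unfolding bounded_iff by force
      have "v t x y \<le> C" if "t \<in> {0..T}" for t x y
      proof -
        have "0 \<le> M * exp (- \<mu> * t) * exp (- a * y\<^sup>2 / 2)" using \<open>0 \<le> M\<close> by simp
        then show ?thesis using C[OF that, of x y] by (simp add: v_def)
      qed
      then show ?thesis by blast
    qed
    show "heat_subsolution (\<lambda>x y. 1 - A\<^sup>2 * (y - \<epsilon> * \<theta> x)\<^sup>2) v"
      unfolding v_def
      by (rule heat_subsolution_minus_gaussian[OF global_solution_heat_subsolution[OF sol nonneg]
            potential \<open>0 \<le> M\<close>])
    show "1 - A\<^sup>2 * (y - \<epsilon> * \<theta> x)\<^sup>2 \<le> 1" for x y by simp
    show "v 0 x y \<le> 0" for x y using init[of x y] by (simp add: v_def u0)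
  qed fact
  then show ?thesis by (simp add: v_def)
qed

theorem mainTheorem1:
  fixes A \<mu>0 a :: real and \<theta> :: "real \<Rightarrow> real"
  assumes "A > 0"
    and "A - 1 > 0"
    and "0 < \<mu>0" and "\<mu>0 < A - 1"
    and "\<mu>0 + 1 < a" and "a < (A - 1) + 1"
    and "continuous_on UNIV \<theta>" and "bounded (range \<theta>)"
  shows "\<exists>\<epsilon>0>0. \<forall>\<epsilon>::real. \<bar>\<epsilon>\<bar> < \<epsilon>0 \<longrightarrow>
           (\<forall>(u0 :: real \<Rightarrow> real \<Rightarrow> real) (u :: real \<Rightarrow> real \<Rightarrow> real \<Rightarrow> real).
              is_global_solution A \<epsilon> \<theta> u0 u
              \<and> (\<forall>t\<ge>0. \<forall>x y. 0 \<le> u t x y)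
              \<and> bdd_above ((\<lambda>(x, y). u0 x y * exp (a * y\<^sup>2 / 2)) ` UNIV)
              \<longrightarrow> (let M = (SUP (x, y)\<in>UNIV. u0 x y * exp (a * y\<^sup>2 / 2)) in
                   \<forall>t\<ge>0. \<forall>x y. 0 \<le> u t x y \<and>
                      u t x y \<le> M * exp (- \<mu>0 * t) * exp (- a * y\<^sup>2 / 2)))"
proof -
  obtain \<epsilon>0 where "0 < \<epsilon>0" and small:
    "\<And>\<epsilon> x y. \<bar>\<epsilon>\<bar> < \<epsilon>0 \<Longrightarrow> a\<^sup>2 * y\<^sup>2 - (a - 1 - \<mu>0) \<le> A\<^sup>2 * (y - \<epsilon> * \<theta> x)\<^sup>2"
    using small_shift_potential_bound[OF assms(8), of a A "a - 1 - \<mu>0"] assms(3-6) by auto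
  show ?thesis
  proof (intro exI[of _ \<epsilon>0] conjI allI impI \<open>0 < \<epsilon>0\<close>)
    fix \<epsilon> :: real and u0 :: "real \<Rightarrow> real \<Rightarrow> real" and u :: "real \<Rightarrow> real \<Rightarrow> real \<Rightarrow> real"
    assume "\<bar>\<epsilon>\<bar> < \<epsilon>0" and "is_global_solution A \<epsilon> \<theta> u0 u \<and> (\<forall>t\<ge>0. \<forall>x y. 0 \<le> u t x y)
              \<and> bdd_above ((\<lambda>(x, y). u0 x y * exp (a * y\<^sup>2 / 2)) ` UNIV)"
    then have sol: "is_global_solution A \<epsilon> \<theta> u0 u" and nonneg: "\<And>t x y. 0 \<le> t \<Longrightarrow> 0 \<le> u t x y"
      and init: "\<And>x y. u0 x y \<le> (SUP (x, y)\<in>UNIV. u0 x y * exp (a * y\<^sup>2 / 2)) * exp (- a * y\<^sup>2 / 2)"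
      using le_weighted_sup by auto
    have "0 \<le> u0 0 0" using sol nonneg[of 0 0 0] by (simp add: is_global_solution_def)
    then have M: "0 \<le> (SUP (x, y)\<in>UNIV. u0 x y * exp (a * y\<^sup>2 / 2))" using init[of 0 0] by simp
    have potential: "1 - A\<^sup>2 * (y - \<epsilon> * \<theta> x)\<^sup>2 \<le> a - \<mu>0 - a\<^sup>2 * y\<^sup>2" for x y
      using small[OF \<open>\<bar>\<epsilon>\<bar> < \<epsilon>0\<close>, of y x] by linarith
    show "let M = (SUP (x, y)\<in>UNIV. u0 x y * exp (a * y\<^sup>2 / 2)) in
        \<forall>t\<ge>0. \<forall>x y. 0 \<le> u t x y \<and> u t x y \<le> M * exp (- \<mu>0 * t) * exp (- a * y\<^sup>2 / 2)"
      using global_solution_gaussian_bound[OF sol nonneg potential M init] nonneg by simp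
  qed
qed

end
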